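(* Let $M\ge1$, $\ell\ge1$, $1\le m\le\ell$, and let $\lambda_1,\dots,\lambda_m$ be positive integers with $\lambda_1+\dots+\lambda_m=\ell$. For $k=(k_1,\dots,k_\ell)\in\mathbb{Z}^\ell$ define the block sums $K_j=\sum_{l=\lambda_1+\dots+\lambda_{j-1}+1}^{\lambda_1+\dots+\lambda_j}k_l$ for $j=1,\dots,m$. Let $\epsilon_1,\dots,\epsilon_m\in\{\pm1\}$ with $\prod_{j=1}^m\epsilon_j=-1$. Let $\mathcal N_{\mathrm{odd}}$ be the number of $(n_1,\dots,n_m)\in\mathbb{Z}^m$ with each $n_j$ odd, $-(2M-1)\le n_j\le 2M-1$, and $\tfrac12 n_j-\epsilon_{j-1}\tfrac12 n_{j-1}=-K_j$ for $j=1,\dots,m$, where indices are taken cyclically modulo $m$ (so $n_0=n_m$, $\epsilon_0=\epsilon_m$). Then $\mathcal N_{\mathrm{odd}}\in\{0,1\}$. Moreover, if $\sum_{l=1}^\ell k_l$ is even then $\mathcal N_{\mathrm{odd}}=0$, and if $\sum_{l=1}^\ell k_l$ is odd and $\sum_{l=1}^\ell|k_l|\le 2M-1$ then $\mathcal N_{\mathrm{odd}}=1$. *)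

theory Defs
  imports Complex_Main
begin

definition lam_psum :: "(nat \<Rightarrow> nat) \<Rightarrow> nat \<Rightarrow> nat" where
  "lam_psum lam j = (\<Sum>i\<in>{1..j}. lam i)"

definition block_sum :: "(nat \<Rightarrow> nat) \<Rightarrow> (nat \<Rightarrow> int) \<Rightarrow> nat \<Rightarrow> int" where
  "block_sum lam k j = (\<Sum>l\<in>{lam_psum lam (j - 1) + 1 .. lam_psum lam j}. k l)"

definition cyc_prev :: "nat \<Rightarrow> nat \<Rightarrow> nat" where
  "cyc_prev m j = (if j = 1 then m else j - 1)"

definition odd_solutions ::
  "nat \<Rightarrow> nat \<Rightarrow> (nat \<Rightarrow> nat) \<Rightarrow> (nat \<Rightarrow> int) \<Rightarrow> (nat \<Rightarrow> int) \<Rightarrow> (nat \<Rightarrow> int) set" where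
  "odd_solutions M m lam k eps =
     {n. (\<forall>j. j \<notin> {1..m} \<longrightarrow> n j = 0) \<and>
         (\<forall>j\<in>{1..m}. odd (n j) \<and> - (2 * int M - 1) \<le> n j \<and> n j \<le> 2 * int M - 1 \<and>
            (1/2) * real_of_int (n j) - real_of_int (eps (cyc_prev m j)) * (1/2) * real_of_int (n (cyc_prev m j))
              = - real_of_int (block_sum lam k j))}"

definition N_odd :: "nat \<Rightarrow> nat \<Rightarrow> (nat \<Rightarrow> nat) \<Rightarrow> (nat \<Rightarrow> int) \<Rightarrow> (nat \<Rightarrow> int) \<Rightarrow> nat" where
  "N_odd M m lam k eps = card (odd_solutions M m lam k eps)"

end

theory Submission
  imports Defs
begin

text \<open>
  Doubled, the defining equations form the cyclic integer system
  \<open>n\<^sub>j - \<epsilon>\<^sub>j\<^sub>-\<^sub>1 n\<^sub>j\<^sub>-\<^sub>1 = -2 K\<^sub>j\<close>. It has at most one solution: a difference \<open>d\<close> of two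
  solutions satisfies \<open>d\<^sub>j = \<tau>\<^sub>j\<^sub>-\<^sub>1 d\<^sub>1\<close> with \<open>\<tau>\<^sub>j = \<epsilon>\<^sub>1\<cdots>\<epsilon>\<^sub>j\<close>, and closing the cycle gives
  \<open>d\<^sub>1 = \<tau>\<^sub>m d\<^sub>1 = -d\<^sub>1\<close>. Substituting \<open>n\<^sub>j = \<tau>\<^sub>j\<^sub>-\<^sub>1 x\<^sub>j\<close> removes the signs up to the
  antiperiodic closure \<open>x\<^sub>0 = -x\<^sub>m\<close>, which yields the explicit solution
  \<open>x\<^sub>j = \<Sum>\<^sub>i\<^sub>>\<^sub>j c\<^sub>i - \<Sum>\<^sub>i\<^sub>\<le>\<^sub>j c\<^sub>i\<close> with \<open>c\<^sub>i = \<tau>\<^sub>i\<^sub>-\<^sub>1 K\<^sub>i\<close>. Every \<open>x\<^sub>j\<close> has the parity of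
  \<open>\<Sum> K\<^sub>i = \<Sum> k\<^sub>l\<close> and absolute value at most \<open>\<Sum> |K\<^sub>i| \<le> \<Sum> |k\<^sub>l|\<close>, so the solution is
  odd exactly when \<open>\<Sum> k\<^sub>l\<close> is odd, and then lies in the box once \<open>\<Sum> |k\<^sub>l| \<le> 2M - 1\<close>.
\<close>

definition solves_cyclic :: "nat \<Rightarrow> (nat \<Rightarrow> int) \<Rightarrow> (nat \<Rightarrow> int) \<Rightarrow> (nat \<Rightarrow> int) \<Rightarrow> bool" where
  "solves_cyclic m eps b n \<longleftrightarrow>
     (\<forall>j\<in>{1..m}. n j - eps (cyc_prev m j) * n (cyc_prev m j) = b j)"

lemma half_eq_iff_int:
  "(1/2) * real_of_int a - real_of_int e * (1/2) * real_of_int b = - real_of_int c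
   \<longleftrightarrow> a - e * b = -2 * c"
proof -
  have "(1/2) * real_of_int a - real_of_int e * (1/2) * real_of_int b = - real_of_int c
     \<longleftrightarrow> real_of_int (a - e * b) = real_of_int (-2 * c)"
    by (simp add: field_simps)
  then show ?thesis
    by (simp only: of_int_eq_iff)
qed

lemma odd_solutions_iff:
  "n \<in> odd_solutions M m lam k eps \<longleftrightarrow>
     (\<forall>j. j \<notin> {1..m} \<longrightarrow> n j = 0) \<and>
     (\<forall>j\<in>{1..m}. odd (n j) \<and> \<bar>n j\<bar> \<le> 2 * int M - 1) \<and>
     solves_cyclic m eps (\<lambda>j. -2 * block_sum lam k j) n"
  unfolding odd_solutions_def solves_cyclic_def half_eq_iff_int abs_le_iff by auto

lemma sum_block_sum:
  "(\<Sum>j\<in>{1..m}. block_sum lam f j) = (\<Sum>l\<in>{1..lam_psum lam m}. f l)"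
proof (induction m)
  case 0
  then show ?case by (simp add: lam_psum_def)
next
  case (Suc m)
  have "lam_psum lam (Suc m) = lam_psum lam m + lam (Suc m)"
    by (simp add: lam_psum_def)
  then have "(\<Sum>l\<in>{1..lam_psum lam (Suc m)}. f l) =
      (\<Sum>l\<in>{1..lam_psum lam m}. f l) + block_sum lam f (Suc m)"
    unfolding block_sum_def
    using sum.ub_add_nat[of 1 "lam_psum lam m" f "lam (Suc m)"] by simp
  with Suc.IH show ?case by simp
qed

lemma sum_abs_block_sum_le:
  "(\<Sum>j\<in>{1..m}. \<bar>block_sum lam k j\<bar>) \<le> (\<Sum>l\<in>{1..lam_psum lam m}. \<bar>k l\<bar>)"
proof -
  have "(\<Sum>j\<in>{1..m}. \<bar>block_sum lam k j\<bar>) \<le> (\<Sum>j\<in>{1..m}. block_sum lam (\<lambda>l. \<bar>k l\<bar>) j)"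
    by (rule sum_mono) (simp add: block_sum_def sum_abs)
  then show ?thesis
    using sum_block_sum[of lam "\<lambda>l. \<bar>k l\<bar>" m] by simp
qed

definition sign_prod :: "(nat \<Rightarrow> int) \<Rightarrow> nat \<Rightarrow> int" where
  "sign_prod eps j = (\<Prod>i\<in>{1..j}. eps i)"

lemma sign_prod_0 [simp]: "sign_prod eps 0 = 1"
  by (simp add: sign_prod_def)

lemma sign_prod_Suc: "sign_prod eps (Suc j) = sign_prod eps j * eps (Suc j)"
  by (simp add: sign_prod_def)

lemma abs_sign_prod:
  assumes "\<forall>i\<in>{1..m}. \<bar>eps i\<bar> = 1" and "j \<le> m"
  shows "\<bar>sign_prod eps j\<bar> = 1"
  using assms(2)
proof (induction j)
  case (Suc j)
  then show ?case
    using assms(1) by (simp add: sign_prod_Suc abs_mult)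
qed simp

lemma sign_prod_cases:
  assumes "\<forall>i\<in>{1..m}. \<bar>eps i\<bar> = 1" and "j \<le> m"
  shows "sign_prod eps j = 1 \<or> sign_prod eps j = -1"
  using abs_sign_prod[OF assms] by arith

lemma solves_cyclic_unique:
  assumes m: "1 \<le> m" and prod: "sign_prod eps m = -1"
    and n: "solves_cyclic m eps b n" and n': "solves_cyclic m eps b n'"
    and j: "j \<in> {1..m}"
  shows "n j = n' j"
proof -
  define d where "d i = n i - n' i" for i
  have step: "d i = eps (cyc_prev m i) * d (cyc_prev m i)" if "i \<in> {1..m}" for i
    using n n' that unfolding solves_cyclic_def d_def by (auto simp: algebra_simps)
  have propagate: "d i = sign_prod eps (i - 1) * d 1" if "1 \<le> i" "i \<le> m" for i
    using that
  proof (induction i rule: nat_induct_at_least)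
    case base
    then show ?case by simp
  next
    case (Suc i)
    have "cyc_prev m (Suc i) = i"
      using Suc.hyps by (simp add: cyc_prev_def)
    then have "d (Suc i) = eps i * d i"
      using step[of "Suc i"] Suc.prems by simp
    also have "\<dots> = eps i * sign_prod eps (i - 1) * d 1"
      using Suc.IH Suc.prems by simp
    also have "\<dots> = sign_prod eps (Suc i - 1) * d 1"
      using Suc.hyps sign_prod_Suc[of eps "i - 1"] by (simp add: mult.commute)
    finally show ?case .
  qed
  have "d 1 = eps m * d m"
    using step[of 1] m by (simp add: cyc_prev_def)
  also have "\<dots> = sign_prod eps m * d 1"
    using propagate[of m] m sign_prod_Suc[of eps "m - 1"] by (simp add: mult.commute)
  finally have "d 1 = 0"
    using prod by simp
  then show ?thesis
    using propagate[of j] j by (simp add: d_def)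
qed

definition prefix_negated_sum :: "nat \<Rightarrow> (nat \<Rightarrow> int) \<Rightarrow> nat \<Rightarrow> int" where
  "prefix_negated_sum m c j = (\<Sum>i\<in>{1..m}. c i) - 2 * (\<Sum>i\<in>{1..j}. c i)"

lemma prefix_negated_sum_Suc:
  "prefix_negated_sum m c (Suc j) = prefix_negated_sum m c j - 2 * c (Suc j)"
  by (simp add: prefix_negated_sum_def algebra_simps)

lemma prefix_negated_sum_0_m:
  "prefix_negated_sum m c 0 = - prefix_negated_sum m c m"
  by (simp add: prefix_negated_sum_def)

lemma odd_prefix_negated_sum_iff:
  "odd (prefix_negated_sum m c j) \<longleftrightarrow> odd (\<Sum>i\<in>{1..m}. c i)"
  by (simp add: prefix_negated_sum_def)

lemma abs_prefix_negated_sum_le: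
  assumes "j \<le> m"
  shows "\<bar>prefix_negated_sum m c j\<bar> \<le> (\<Sum>i\<in>{1..m}. \<bar>c i\<bar>)"
proof -
  have split: "(\<Sum>i\<in>{1..m}. f i) = (\<Sum>i\<in>{1..j}. f i) + (\<Sum>i\<in>{j+1..m}. f i)"
    for f :: "nat \<Rightarrow> int"
    using sum.ub_add_nat[of 1 j f "m - j"] assms by simp
  have "prefix_negated_sum m c j = (\<Sum>i\<in>{j+1..m}. c i) - (\<Sum>i\<in>{1..j}. c i)"
    unfolding prefix_negated_sum_def split[of c] by simp
  also have "\<bar>\<dots>\<bar> \<le> (\<Sum>i\<in>{j+1..m}. \<bar>c i\<bar>) + (\<Sum>i\<in>{1..j}. \<bar>c i\<bar>)"
    using sum_abs[of c "{j+1..m}"] sum_abs[of c "{1..j}"] by linarith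
  finally show ?thesis
    unfolding split[of "\<lambda>i. \<bar>c i\<bar>"] by simp
qed

definition cyclic_solution :: "nat \<Rightarrow> (nat \<Rightarrow> int) \<Rightarrow> (nat \<Rightarrow> int) \<Rightarrow> nat \<Rightarrow> int" where
  "cyclic_solution m eps K j =
     (if j \<in> {1..m}
      then sign_prod eps (j - 1) * prefix_negated_sum m (\<lambda>i. sign_prod eps (i - 1) * K i) j
      else 0)"

lemma solves_cyclic_cyclic_solution:
  assumes m: "1 \<le> m" and units: "\<forall>i\<in>{1..m}. \<bar>eps i\<bar> = 1" and prod: "sign_prod eps m = -1"
  shows "solves_cyclic m eps (\<lambda>j. -2 * K j) (cyclic_solution m eps K)"
  unfolding solves_cyclic_def
proof
  fix j assume j: "j \<in> {1..m}"
  define c where "c = (\<lambda>i. sign_prod eps (i - 1) * K i)"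
  define x where "x = prefix_negated_sum m c"
  have sol: "cyclic_solution m eps K i = sign_prod eps (i - 1) * x i" if "i \<in> {1..m}" for i
    using that by (simp add: cyclic_solution_def x_def c_def)
  show "cyclic_solution m eps K j - eps (cyc_prev m j) * cyclic_solution m eps K (cyc_prev m j)
      = -2 * K j"
  proof (cases "j = 1")
    case True
    have "eps m * sign_prod eps (m - 1) = -1"
      using sign_prod_Suc[of eps "m - 1"] m prod by (simp add: mult.commute)
    then have "eps m * cyclic_solution m eps K m = x 0"
      using sol[of m] m prefix_negated_sum_0_m[of m c] by (simp add: x_def mult.assoc[symmetric])
    with True m show ?thesis
      using sol[of 1] prefix_negated_sum_Suc[of m c 0]
      by (simp add: cyc_prev_def x_def c_def)
  next
    case False
    then obtain i where i: "j = Suc i" "1 \<le> i" "i < m"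
      using j by (cases j) auto
    have "sign_prod eps i * sign_prod eps i = 1"
      using sign_prod_cases[OF units, of i] i by auto
    then have "sign_prod eps i * x (Suc i) = sign_prod eps i * x i - 2 * K (Suc i)"
      by (simp add: x_def prefix_negated_sum_Suc c_def algebra_simps)
    moreover have "eps i * sign_prod eps (i - 1) = sign_prod eps i"
      using sign_prod_Suc[of eps "i - 1"] i by simp
    ultimately show ?thesis
      using sol[of j] sol[of i] i by (simp add: cyc_prev_def mult.assoc[symmetric])
  qed
qed

lemma odd_cyclic_solution_iff:
  assumes units: "\<forall>i\<in>{1..m}. \<bar>eps i\<bar> = 1" and j: "j \<in> {1..m}"
  shows "odd (cyclic_solution m eps K j) \<longleftrightarrow> odd (\<Sum>i\<in>{1..m}. K i)"
proof -
  have sign: "sign_prod eps (i - 1) = 1 \<or> sign_prod eps (i - 1) = -1" if "i \<in> {1..m}" for i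
    using sign_prod_cases[OF units, of "i - 1"] that by auto
  have "even ((\<Sum>i\<in>{1..m}. sign_prod eps (i - 1) * K i) - (\<Sum>i\<in>{1..m}. K i))"
    unfolding sum_subtractf[symmetric]
    by (rule dvd_sum) (use sign in fastforce)
  then have "odd (\<Sum>i\<in>{1..m}. sign_prod eps (i - 1) * K i) \<longleftrightarrow> odd (\<Sum>i\<in>{1..m}. K i)"
    by (metis even_add diff_add_cancel)
  then show ?thesis
    using sign[OF j] j by (auto simp: cyclic_solution_def odd_prefix_negated_sum_iff)
qed

lemma abs_cyclic_solution_le:
  assumes units: "\<forall>i\<in>{1..m}. \<bar>eps i\<bar> = 1" and j: "j \<in> {1..m}"
  shows "\<bar>cyclic_solution m eps K j\<bar> \<le> (\<Sum>i\<in>{1..m}. \<bar>K i\<bar>)"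
proof -
  have abs_sign: "\<bar>sign_prod eps (i - 1)\<bar> = 1" if "1 \<le> i" "i \<le> m" for i
    using abs_sign_prod[OF units, of "i - 1"] that by simp
  have "\<bar>cyclic_solution m eps K j\<bar>
      = \<bar>prefix_negated_sum m (\<lambda>i. sign_prod eps (i - 1) * K i) j\<bar>"
    using j abs_sign[of j] by (simp add: cyclic_solution_def abs_mult)
  also have "\<dots> \<le> (\<Sum>i\<in>{1..m}. \<bar>sign_prod eps (i - 1) * K i\<bar>)"
    using j by (intro abs_prefix_negated_sum_le) simp
  also have "\<dots> = (\<Sum>i\<in>{1..m}. \<bar>K i\<bar>)"
  proof (rule sum.cong)
    fix i assume "i \<in> {1..m}"
    then show "\<bar>sign_prod eps (i - 1) * K i\<bar> = \<bar>K i\<bar>"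
      using abs_sign[of i] by (simp add: abs_mult)
  qed simp
  finally show ?thesis .
qed

lemma odd_solutions_eq:
  fixes lam :: "nat \<Rightarrow> nat" and k eps :: "nat \<Rightarrow> int"
  assumes m: "1 \<le> m" and units: "\<forall>i\<in>{1..m}. \<bar>eps i\<bar> = 1" and prod: "sign_prod eps m = -1"
  defines "n\<^sub>0 \<equiv> cyclic_solution m eps (block_sum lam k)"
  shows "odd_solutions M m lam k eps =
    (if \<forall>j\<in>{1..m}. odd (n\<^sub>0 j) \<and> \<bar>n\<^sub>0 j\<bar> \<le> 2 * int M - 1 then {n\<^sub>0} else {})"
proof -
  have n\<^sub>0: "solves_cyclic m eps (\<lambda>j. -2 * block_sum lam k j) n\<^sub>0"
    unfolding n\<^sub>0_def using m units prod by (rule solves_cyclic_cyclic_solution)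
  have zero: "\<forall>j. j \<notin> {1..m} \<longrightarrow> n\<^sub>0 j = 0"
    by (simp add: n\<^sub>0_def cyclic_solution_def)
  have unique: "n = n\<^sub>0"
    if zero_n: "\<forall>j. j \<notin> {1..m} \<longrightarrow> n j = 0"
      and n: "solves_cyclic m eps (\<lambda>j. -2 * block_sum lam k j) n" for n
  proof
    fix j
    show "n j = n\<^sub>0 j"
    proof (cases "j \<in> {1..m}")
      case True
      then show ?thesis by (rule solves_cyclic_unique[OF m prod n n\<^sub>0])
    next
      case False
      then show ?thesis using zero_n zero by simp
    qed
  qed
  have "n \<in> odd_solutions M m lam k eps \<longleftrightarrow>
      n = n\<^sub>0 \<and> (\<forall>j\<in>{1..m}. odd (n\<^sub>0 j) \<and> \<bar>n\<^sub>0 j\<bar> \<le> 2 * int M - 1)" for n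
    unfolding odd_solutions_iff using unique zero n\<^sub>0 by blast
  then show ?thesis
    by auto
qed

theorem lemma7:
  fixes M L m :: nat and lam :: "nat \<Rightarrow> nat" and k :: "nat \<Rightarrow> int" and eps :: "nat \<Rightarrow> int"
  assumes "M \<ge> 1" and "L \<ge> 1" and "1 \<le> m" and "m \<le> L"
    and "\<forall>j\<in>{1..m}. lam j > 0"
    and "(\<Sum>j\<in>{1..m}. lam j) = L"
    and "\<forall>j\<in>{1..m}. eps j = 1 \<or> eps j = -1"
    and "(\<Prod>j\<in>{1..m}. eps j) = -1"
  shows "N_odd M m lam k eps \<in> {0, 1}
    \<and> (even (\<Sum>l\<in>{1..L}. k l) \<longrightarrow> N_odd M m lam k eps = 0)
    \<and> (odd (\<Sum>l\<in>{1..L}. k l) \<and> (\<Sum>l\<in>{1..L}. \<bar>k l\<bar>) \<le> 2 * int M - 1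
         \<longrightarrow> N_odd M m lam k eps = 1)"
proof -
  define n\<^sub>0 where "n\<^sub>0 = cyclic_solution m eps (block_sum lam k)"
  have units: "\<forall>j\<in>{1..m}. \<bar>eps j\<bar> = 1"
    using assms(7) by auto
  have sols: "odd_solutions M m lam k eps =
      (if \<forall>j\<in>{1..m}. odd (n\<^sub>0 j) \<and> \<bar>n\<^sub>0 j\<bar> \<le> 2 * int M - 1 then {n\<^sub>0} else {})"
    using odd_solutions_eq[OF assms(3) units] assms(8) by (simp add: sign_prod_def n\<^sub>0_def)
  have psum: "lam_psum lam m = L"
    using assms(6) by (simp add: lam_psum_def)
  have odd_iff: "odd (n\<^sub>0 j) \<longleftrightarrow> odd (\<Sum>l\<in>{1..L}. k l)" if "j \<in> {1..m}" for j
    using odd_cyclic_solution_iff[OF units that] sum_block_sum[of lam k m] psum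
    by (simp add: n\<^sub>0_def)
  have bound: "\<bar>n\<^sub>0 j\<bar> \<le> (\<Sum>l\<in>{1..L}. \<bar>k l\<bar>)" if "j \<in> {1..m}" for j
    using order_trans[OF abs_cyclic_solution_le[OF units that] sum_abs_block_sum_le[of lam k m]] psum
    by (simp add: n\<^sub>0_def)
  show ?thesis
  proof (intro conjI impI)
    show "N_odd M m lam k eps \<in> {0, 1}"
      unfolding N_odd_def sols by simp
  next
    assume "even (\<Sum>l\<in>{1..L}. k l)"
    then have "even (n\<^sub>0 1)"
      using odd_iff[of 1] assms(3) by simp
    then show "N_odd M m lam k eps = 0"
      unfolding N_odd_def sols using assms(3) by auto
  next
    assume "odd (\<Sum>l\<in>{1..L}. k l) \<and> (\<Sum>l\<in>{1..L}. \<bar>k l\<bar>) \<le> 2 * int M - 1"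
    then have "\<forall>j\<in>{1..m}. odd (n\<^sub>0 j) \<and> \<bar>n\<^sub>0 j\<bar> \<le> 2 * int M - 1"
      using odd_iff bound by fastforce
    then show "N_odd M m lam k eps = 1"
      unfolding N_odd_def sols by simp
  qed
qed

end
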